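(* Let $R>0$, let $\{\beta_k\}_{k\ge0}\subseteq(0,1)$ and $\alpha_0\in(0,\frac1R)$. Define sequences $\{A_k\},\{B_k\},\{\alpha_k\}$ by $B_0=1$ and, for $k\ge0$, $$A_k=\frac{\alpha_k}{2\beta_k}B_k,\qquad B_{k+1}=\frac{B_k}{1-\beta_k},\qquad \alpha_{k+1}=\frac{\alpha_k\beta_{k+1}(1-\alpha_k^2R^2-\beta_k^2)}{\beta_k(1-\beta_k)(1-\alpha_k^2R^2)}.$$ Suppose $\alpha_k\in(0,\frac1R)$ for all $k\ge0$. Let $\mathbf L\colon\mathbb R^n\times\mathbb R^m\to\mathbb R$ be $R$-smooth and convex-concave, let $\mathbf z^0\in\mathbb R^n\times\mathbb R^m$, and define the EAG iterates $$\mathbf z^{k+1/2}=\mathbf z^k+\beta_k(\mathbf z^0-\mathbf z^k)-\alpha_k\mathbf G(\mathbf z^k),\qquad \mathbf z^{k+1}=\mathbf z^k+\beta_k(\mathbf z^0-\mathbf z^k)-\alpha_k\mathbf G(\mathbf z^{k+1/2}),\quad k\ge0.$$ Then the sequence $$V_k:=A_k\|\mathbf G(\mathbf z^k)\|^2+B_k\langle\mathbf G(\mathbf z^k),\mathbf z^k-\mathbf z^0\rangle$$ is nonincreasing in $k$.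
   Context: Write $\mathbf z=(\mathbf x,\mathbf y)$. $\mathbf L$ convex-concave: convex in $\mathbf x$ for fixed $\mathbf y$, concave in $\mathbf y$ for fixed $\mathbf x$. $\mathbf G(\mathbf z)=(\nabla_{\mathbf x}\mathbf L(\mathbf x,\mathbf y),-\nabla_{\mathbf y}\mathbf L(\mathbf x,\mathbf y))$; $\mathbf L$ is $R$-smooth if it is differentiable and $\mathbf G$ is $R$-Lipschitz. *)

theory Defs
  imports "HOL-Analysis.Analysis"
begin

text \<open>A saddle function L on R^n x R^m, written as a function of the pair z = (x,y).
  The product type is a real inner product space with inner product
  (x,y) . (x',y') = x . x' + y . y'.\<close>

definition convex_concave :: "('a::real_normed_vector \<times> 'b::real_normed_vector \<Rightarrow> real) \<Rightarrow> bool" where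
  "convex_concave L \<longleftrightarrow>
     (\<forall>y. convex_on UNIV (\<lambda>x. L (x, y))) \<and> (\<forall>x. concave_on UNIV (\<lambda>y. L (x, y)))"

definition grad :: "('a::real_inner \<times> 'b::real_inner \<Rightarrow> real) \<Rightarrow> 'a \<times> 'b \<Rightarrow> 'a \<times> 'b" where
  "grad L z = (SOME g. (L has_derivative (\<lambda>h. g \<bullet> h)) (at z))"

definition saddle_op :: "('a::real_inner \<times> 'b::real_inner \<Rightarrow> real) \<Rightarrow> 'a \<times> 'b \<Rightarrow> 'a \<times> 'b" where
  "saddle_op L z = (fst (grad L z), - snd (grad L z))"

definition R_smooth :: "real \<Rightarrow> ('a::real_inner \<times> 'b::real_inner \<Rightarrow> real) \<Rightarrow> bool" where
  "R_smooth R L \<longleftrightarrow> (\<forall>z. L differentiable (at z)) \<and>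
     (\<forall>z w. norm (saddle_op L z - saddle_op L w) \<le> R * norm (z - w))"

end

theory Submission
  imports Defs
begin

(* Write u, w, v for G at z^k, z^(k+1/2), z^(k+1) and d = z^k - z^0.  Monotonicity of G gives
   0 <= <v - u, z^(k+1) - z^k>, and the Lipschitz bound together with
   z^(k+1) - z^(k+1/2) = alpha_k (u - w) gives |v - w|^2 <= alpha_k^2 R^2 |u - w|^2.
   As a quadratic form in u, w, v, d, the decrease V_k - V_(k+1) equals a nonnegative
   combination of these two slacks and of one completed square |w + t v|^2. *)

lemma convex_on_imp_above_tangent_has_derivative:
  fixes f :: "'a::real_normed_vector \<Rightarrow> real"
  assumes convex: "convex_on UNIV f" and deriv: "(f has_derivative D) (at x)"
  shows "D (y - x) \<le> f y - f x"
proof -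
  define \<phi> where "\<phi> t = f (x + t *\<^sub>R (y - x))" for t :: real
  have "convex_on UNIV \<phi>"
  proof (rule convex_onI)
    fix t s r :: real assume "0 < t" "t < 1"
    have "x + ((1 - t) * s + t * r) *\<^sub>R (y - x)
        = (1 - t) *\<^sub>R (x + s *\<^sub>R (y - x)) + t *\<^sub>R (x + r *\<^sub>R (y - x))"
      by (simp add: algebra_simps)
    then show "\<phi> ((1 - t) *\<^sub>R s + t *\<^sub>R r) \<le> (1 - t) * \<phi> s + t * \<phi> r"
      unfolding \<phi>_def using convex_onD[OF convex, of t] \<open>0 < t\<close> \<open>t < 1\<close> by simp
  qed simp
  moreover have "(\<phi> has_field_derivative D (y - x)) (at 0 within UNIV)"
  proof -
    have line: "((\<lambda>t. x + t *\<^sub>R (y - x)) has_derivative (\<lambda>t. t *\<^sub>R (y - x))) (at 0)"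
      by (auto intro!: derivative_eq_intros)
    have "(\<phi> has_derivative (\<lambda>t. D (t *\<^sub>R (y - x)))) (at 0)"
      unfolding \<phi>_def using has_derivative_compose[OF line] deriv by simp
    then have "(\<phi> has_derivative (\<lambda>t. t * D (y - x))) (at 0)"
      by (simp add: linear_scale[OF has_derivative_linear[OF deriv]])
    then show ?thesis
      by (simp add: has_field_derivative_def mult.commute[of _ "D (y - x)"])
  qed
  ultimately show ?thesis
    using convex_on_imp_above_tangent[of UNIV \<phi> 0 1] by (simp add: \<phi>_def)
qed

lemma has_derivative_grad:
  fixes L :: "'a::euclidean_space \<times> 'b::euclidean_space \<Rightarrow> real"
  assumes "L differentiable (at z)"
  shows "(L has_derivative (\<lambda>h. grad L z \<bullet> h)) (at z)"
proof -
  obtain D where deriv: "(L has_derivative D) (at z)"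
    using assms by (auto simp: differentiable_def)
  have "D h = adjoint D 1 \<bullet> h" for h
    using adjoint_works[OF has_derivative_linear[OF deriv], of h 1] by (simp add: inner_commute)
  then have "\<exists>g. (L has_derivative (\<lambda>h. g \<bullet> h)) (at z)"
    using deriv by (metis ext)
  then show ?thesis
    unfolding grad_def by (rule someI_ex)
qed

lemma has_derivative_grad_fst:
  fixes L :: "'a::euclidean_space \<times> 'b::euclidean_space \<Rightarrow> real"
  assumes "L differentiable (at (x, y))"
  shows "((\<lambda>u. L (u, y)) has_derivative (\<lambda>h. fst (grad L (x, y)) \<bullet> h)) (at x)"
proof -
  have "((\<lambda>u. (u, y)) has_derivative (\<lambda>h. (h, 0))) (at x)"
    by (auto intro!: derivative_eq_intros)
  from has_derivative_compose[OF this has_derivative_grad[OF assms]]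
  show ?thesis by (simp add: inner_Pair_0)
qed

lemma has_derivative_grad_snd:
  fixes L :: "'a::euclidean_space \<times> 'b::euclidean_space \<Rightarrow> real"
  assumes "L differentiable (at (x, y))"
  shows "((\<lambda>v. L (x, v)) has_derivative (\<lambda>h. snd (grad L (x, y)) \<bullet> h)) (at y)"
proof -
  have "((\<lambda>v. (x, v)) has_derivative (\<lambda>h. (0, h))) (at y)"
    by (auto intro!: derivative_eq_intros)
  from has_derivative_compose[OF this has_derivative_grad[OF assms]]
  show ?thesis by (simp add: inner_Pair_0)
qed

lemma saddle_op_monotone:
  fixes L :: "'a::euclidean_space \<times> 'b::euclidean_space \<Rightarrow> real"
  assumes diff: "\<And>z. L differentiable (at z)" and cc: "convex_concave L"
  shows "0 \<le> (saddle_op L z - saddle_op L w) \<bullet> (z - w)"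
proof -
  obtain x y x' y' where zw: "z = (x, y)" "w = (x', y')" by fastforce
  have convex: "convex_on UNIV (\<lambda>u. L (u, v))" for v
    using cc unfolding convex_concave_def by blast
  have convex_neg: "convex_on UNIV (\<lambda>v. - L (u, v))" for u
    using cc unfolding convex_concave_def concave_on_def by blast
  have tangent_fst: "fst (grad L (p, q)) \<bullet> (p' - p) \<le> L (p', q) - L (p, q)" for p p' q
    using convex_on_imp_above_tangent_has_derivative[OF convex has_derivative_grad_fst[OF diff]]
    by simp
  have tangent_snd: "- (snd (grad L (p, q)) \<bullet> (q' - q)) \<le> L (p, q) - L (p, q')" for p q q'
    using convex_on_imp_above_tangent_has_derivative
            [OF convex_neg has_derivative_minus[OF has_derivative_grad_snd[OF diff]]]
    by simp
  show ?thesis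
    using tangent_fst[of x y x'] tangent_fst[of x' y' x] tangent_snd[of x y y'] tangent_snd[of x' y' y]
    unfolding zw saddle_op_def by (simp add: inner_diff_left inner_diff_right algebra_simps)
qed

(* The multipliers B/b, aB/(2sb), aB(1-s)/(2sb) are forced by the coefficients of
   ud, uu and ww; t then makes the remaining vw- and vv-coefficients match. *)

lemma potential_decrease_identity:
  fixes a b s B uu ud uw vv vd vw ww :: real
  assumes "b \<noteq> 0" "b \<noteq> 1" "s \<noteq> 0" "s \<noteq> 1"
  defines "t \<equiv> (b - (1 - s)) / ((1 - s) * (1 - b))"
  shows "a / (2 * b) * B * uu + B * ud
           - (a * (1 - s - b\<^sup>2) / (2 * b * (1 - b) * (1 - s)) * (B / (1 - b)) * vv
              + B / (1 - b) * ((1 - b) * vd - a * vw))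
         = B / b * (b * ud - b * vd + a * uw - a * vw)
           + a * B / (2 * s * b) * (s * (uu - 2 * uw + ww) - (vv - 2 * vw + ww))
           + a * B * (1 - s) / (2 * s * b) * (ww + 2 * t * vw + t\<^sup>2 * vv)"
proof -
  obtain p q where pq: "1 - s = p" "1 - b = q" by blast
  with assms have "p \<noteq> 0" "q \<noteq> 0" by auto
  with assms show ?thesis
    unfolding t_def pq by (simp add: field_simps power_divide) (use pq in algebra)
qed

lemma anchored_potential_decrease:
  fixes u v w d :: "'a::real_inner"
  assumes a: "0 < a" and b: "0 < b" "b < 1" and s: "0 < s" "s < 1" and B: "0 \<le> B"
    and monotone: "0 \<le> (v - u) \<bullet> ((- b) *\<^sub>R d - a *\<^sub>R w)"
    and lipschitz: "(norm (v - w))\<^sup>2 \<le> s * (norm (u - w))\<^sup>2"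
  shows "a * (1 - s - b\<^sup>2) / (2 * b * (1 - b) * (1 - s)) * (B / (1 - b)) * (norm v)\<^sup>2
           + B / (1 - b) * (v \<bullet> ((1 - b) *\<^sub>R d - a *\<^sub>R w))
         \<le> a / (2 * b) * B * (norm u)\<^sup>2 + B * (u \<bullet> d)"
proof -
  define t where "t = (b - (1 - s)) / ((1 - s) * (1 - b))"
  have monotone': "0 \<le> b * (u \<bullet> d) - b * (v \<bullet> d) + a * (u \<bullet> w) - a * (v \<bullet> w)"
    using monotone by (simp add: inner_diff_left inner_diff_right algebra_simps)
  have lipschitz': "0 \<le> s * (u \<bullet> u - 2 * (u \<bullet> w) + w \<bullet> w) - (v \<bullet> v - 2 * (v \<bullet> w) + w \<bullet> w)"
    using lipschitz
    by (simp add: power2_norm_eq_inner inner_diff_left inner_diff_right inner_commute)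
       (simp add: algebra_simps)
  have square: "0 \<le> w \<bullet> w + 2 * t * (v \<bullet> w) + t\<^sup>2 * (v \<bullet> v)"
    using inner_ge_zero[of "w + t *\<^sub>R v"]
    by (simp add: inner_add_left inner_add_right inner_commute power2_eq_square algebra_simps)
  have "0 \<le> B / b * (b * (u \<bullet> d) - b * (v \<bullet> d) + a * (u \<bullet> w) - a * (v \<bullet> w))
      + a * B / (2 * s * b) * (s * (u \<bullet> u - 2 * (u \<bullet> w) + w \<bullet> w) - (v \<bullet> v - 2 * (v \<bullet> w) + w \<bullet> w))
      + a * B * (1 - s) / (2 * s * b) * (w \<bullet> w + 2 * t * (v \<bullet> w) + t\<^sup>2 * (v \<bullet> v))"
  proof -
    have "0 \<le> B / b" "0 \<le> a * B / (2 * s * b)" "0 \<le> a * B * (1 - s) / (2 * s * b)"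
      using a b s B by simp_all
    then show ?thesis
      using mult_nonneg_nonneg[OF _ monotone'] mult_nonneg_nonneg[OF _ lipschitz']
        mult_nonneg_nonneg[OF _ square]
      by (meson add_nonneg_nonneg)
  qed
  also have "\<dots> = a / (2 * b) * B * (u \<bullet> u) + B * (u \<bullet> d)
      - (a * (1 - s - b\<^sup>2) / (2 * b * (1 - b) * (1 - s)) * (B / (1 - b)) * (v \<bullet> v)
         + B / (1 - b) * ((1 - b) * (v \<bullet> d) - a * (v \<bullet> w)))"
    unfolding t_def using b s by (intro potential_decrease_identity[symmetric]) auto
  finally show ?thesis
    by (simp add: power2_norm_eq_inner inner_diff_right)
qed

lemma eag_step_potential_decrease:
  fixes L :: "'a::euclidean_space \<times> 'b::euclidean_space \<Rightarrow> real"
  assumes smooth: "R_smooth R L" and cc: "convex_concave L" and R: "0 < R"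
    and a: "0 < a" "a < 1 / R" and b: "0 < b" "b < 1" and B: "0 \<le> B"
    and zh: "zh = z + b *\<^sub>R (z0 - z) - a *\<^sub>R saddle_op L z"
    and z': "z' = z + b *\<^sub>R (z0 - z) - a *\<^sub>R saddle_op L zh"
  shows "a * (1 - a\<^sup>2 * R\<^sup>2 - b\<^sup>2) / (2 * b * (1 - b) * (1 - a\<^sup>2 * R\<^sup>2)) * (B / (1 - b))
             * (norm (saddle_op L z'))\<^sup>2
           + B / (1 - b) * (saddle_op L z' \<bullet> (z' - z0))
         \<le> a / (2 * b) * B * (norm (saddle_op L z))\<^sup>2 + B * (saddle_op L z \<bullet> (z - z0))"
proof -
  define u v w where "u = saddle_op L z" and "v = saddle_op L z'" and "w = saddle_op L zh"
  have "a * R < 1"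
    using a R by (simp add: field_simps)
  then have s: "0 < a\<^sup>2 * R\<^sup>2" "a\<^sup>2 * R\<^sup>2 < 1"
    using a R by (simp_all add: power_mult_distrib[symmetric] power_less_one_iff)
  have "L differentiable (at p)" for p
    using smooth unfolding R_smooth_def by blast
  then have "0 \<le> (v - u) \<bullet> (z' - z)"
    unfolding u_def v_def using saddle_op_monotone[OF _ cc] by blast
  moreover have "z' - z = (- b) *\<^sub>R (z - z0) - a *\<^sub>R w"
    unfolding z' w_def by (simp add: algebra_simps)
  moreover have "norm (v - w) \<le> a * R * norm (u - w)"
  proof -
    have "norm (v - w) \<le> R * norm (z' - zh)"
      using smooth unfolding R_smooth_def v_def w_def by blast
    also have "z' - zh = a *\<^sub>R (u - w)"
      unfolding z' zh u_def w_def by (simp add: algebra_simps)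
    finally show ?thesis
      using a by (simp add: mult_ac)
  qed
  then have "(norm (v - w))\<^sup>2 \<le> a\<^sup>2 * R\<^sup>2 * (norm (u - w))\<^sup>2"
    by (metis norm_ge_zero power_mono power_mult_distrib)
  moreover have "z' - z0 = (1 - b) *\<^sub>R (z - z0) - a *\<^sub>R w"
    unfolding z' w_def by (simp add: algebra_simps)
  ultimately show ?thesis
    using anchored_potential_decrease[OF a(1) b s B] by (simp add: u_def v_def)
qed

theorem lemma2:
  fixes R :: real
    and \<beta> \<alpha> A B :: "nat \<Rightarrow> real"
    and L :: "(real ^ 'n) \<times> (real ^ 'm) \<Rightarrow> real"
    and z zh :: "nat \<Rightarrow> (real ^ 'n) \<times> (real ^ 'm)"
    and V :: "nat \<Rightarrow> real"
  assumes R_pos: "R > 0"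
    and beta_range: "\<And>k. 0 < \<beta> k \<and> \<beta> k < 1"
    and alpha0: "0 < \<alpha> 0 \<and> \<alpha> 0 < 1 / R"
    and B0: "B 0 = 1"
    and A_def: "\<And>k. A k = \<alpha> k / (2 * \<beta> k) * B k"
    and B_rec: "\<And>k. B (Suc k) = B k / (1 - \<beta> k)"
    and alpha_rec: "\<And>k. \<alpha> (Suc k) =
          \<alpha> k * \<beta> (Suc k) * (1 - (\<alpha> k)\<^sup>2 * R\<^sup>2 - (\<beta> k)\<^sup>2)
          / (\<beta> k * (1 - \<beta> k) * (1 - (\<alpha> k)\<^sup>2 * R\<^sup>2))"
    and alpha_range: "\<And>k. 0 < \<alpha> k \<and> \<alpha> k < 1 / R"
    and smooth: "R_smooth R L"
    and cc: "convex_concave L"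
    and zh_def: "\<And>k. zh k = z k + \<beta> k *\<^sub>R (z 0 - z k) - \<alpha> k *\<^sub>R saddle_op L (z k)"
    and z_rec: "\<And>k. z (Suc k) = z k + \<beta> k *\<^sub>R (z 0 - z k) - \<alpha> k *\<^sub>R saddle_op L (zh k)"
    and V_def: "\<And>k. V k = A k * (norm (saddle_op L (z k)))\<^sup>2
                         + B k * (saddle_op L (z k) \<bullet> (z k - z 0))"
  shows "\<And>k. V (Suc k) \<le> V k"
proof -
  fix k
  have B_pos: "0 < B j" for j
    by (induction j) (use B0 B_rec beta_range in \<open>auto simp: divide_pos_pos\<close>)
  have A_Suc: "A (Suc k) = \<alpha> k * (1 - (\<alpha> k)\<^sup>2 * R\<^sup>2 - (\<beta> k)\<^sup>2)
      / (2 * \<beta> k * (1 - \<beta> k) * (1 - (\<alpha> k)\<^sup>2 * R\<^sup>2)) * (B k / (1 - \<beta> k))"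
    using beta_range[of "Suc k"] by (simp add: A_def alpha_rec B_rec)
  have "0 < \<alpha> k" "\<alpha> k < 1 / R" "0 < \<beta> k" "\<beta> k < 1"
    using alpha_range beta_range by auto
  from eag_step_potential_decrease[OF smooth cc R_pos this less_imp_le[OF B_pos] zh_def z_rec]
  show "V (Suc k) \<le> V k"
    by (simp add: V_def A_Suc A_def[of k] B_rec)
qed

end
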